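(* Let $r\ge 2$, let $\pi$ be a set partition of $\{1,\dots,r\}$ having $\{1\}$ as a block, with $k$ blocks, and let $c\in\mathcal{C}(\pi)$. In the construction of $\psi_\pi(c)$ described in the context: (i) at Stage 1, the trees $\tau_1,\dots,\tau_k$ are $\pi$-increasing and irreducible; (ii) for $i=2,\dots,k$, in the input to Stage $i$, the trees $\tau_i,\dots,\tau_k$ are $\pi$-increasing, irreducible, and contain $\mu_i,\dots,\mu_k$ respectively; and if $\tau_1$ has been created by an internal splice at some previous stage, then $\tau_1$ is $\pi$-increasing and reducible; (iii) the tree $\psi_\pi(c)$ is $\pi$-increasing and reducible.
   Context: The blocks of $\pi$ are $\pi_1,\dots,\pi_k$ with maxima $\mu_i=\max\pi_i$, indexed so that $1=\mu_1<\dots<\mu_k=r$ (so $\pi_1=\{1\}$); $\pi^x$ denotes the block containing $x$. $\mathcal{C}(\pi)=\{(c_2,\dots,c_{k-1}):1\le c_i\le\mu_i\}$. An unordered increasing tree is a rooted tree on distinct positive integers, sons unordered, each son larger than its father. A $\pi$-increasing tree is an unordered increasing tree $T$ whose vertex-set is a union of blocks of $\pi$ and such that for any two elements $i<j$ of a same block of $\pi$ contained in $V(T)$, $i$ is an ancestor of $j$ in $T$. $v$-decomposition: for a vertex $v$ of $T$ with chain $a_1<\dots<a_\ell=v$ from the root to $v$, removing the chain edges leaves components $T^{(a_j)}$ rooted at $a_j$. Splice: for unordered increasing trees $T_1,T_2$ with disjoint vertex-sets and $v_1\in V(T_1)$, $v_2\in V(T_2)$, $v_1>v_2$, $\mathrm{spl}(T_1,v_1;T_2,v_2)$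 is the tree on $V(T_1)\cup V(T_2)$ obtained by merging the root-to-$v_1$ chain of $T_1$ and the root-to-$v_2$ chain of $T_2$ into one increasing chain (ending at $v_1$) and attaching at each chain vertex its component from the $v_1$-decomposition of $T_1$ or the $v_2$-decomposition of $T_2$. $v$-dependence graph $G_v(T)$ of a $\pi$-increasing tree $T$: directed graph on the blocks of $\pi$ contained in $V(T)$; for each such block $\pi_i$ whose maximum $\mu_i$ is not on the chain from the root to $v$, $\mu_i$ is a non-root vertex of a unique $T^{(a_j)}$ and there is an edge (possibly a loop) $\pi_i\to\pi^{a_j}$. A $\pi$-increasing tree with maximum vertex $M$ is irreducible if $G_M(T)$ is connected (ignoring directions), reducible otherwise. Construction of $\psi_\pi(c)$: Stage 1: $\tau_\ell$ is the increasing chain on the elements of $\pi_\ell$ ($\ell=1,\dots,k$), and $\nu=1$. For $i=2,\dots,k-1$ (Stage $i$): if $c_i$ is a vertex of $\tau_1$ or $\tau_i$ (Case 1, an internal splice), replace $\tau_1$ by $\mathrm{spl}(\tau_i,\mu_i;\tau_1,\nu)$, discard $\tau_i$, set $\nu=c_i$; otherwise $c_i$ lies in some $\tau_j$, $j>i$ (Case 2, an external splice), replace $\tau_j$ by $\mathrm{spl}(\tau_i,\mu_i;\tau_j,c_i)$ and discard $\tau_i$. Stage $k$ (also an internal splice): $\psi_\pi(c)=\mathrm{spl}(\tau_k,\mu_k;\tau_1,\nu)$. *)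

theory Defs
  imports Main "HOL-Library.Disjoint_Sets"
begin

text \<open>A rooted tree on a finite set of positive integers, given by its vertex set and a
  parent function.  The parent function is normalised: it is 0 (not a vertex) at the root
  and outside the vertex set.\<close>
type_synonym tree = "nat set \<times> (nat \<Rightarrow> nat)"

definition verts :: "tree \<Rightarrow> nat set" where "verts T = fst T"
definition par :: "tree \<Rightarrow> nat \<Rightarrow> nat" where "par T = snd T"

definition inc_tree :: "tree \<Rightarrow> bool" where
  "inc_tree T \<longleftrightarrow> finite (verts T) \<and> verts T \<noteq> {} \<and> 0 \<notin> verts T \<and>
     par T (Min (verts T)) = 0 \<and>
     (\<forall>x \<in> verts T. x \<noteq> Min (verts T) \<longrightarrow> par T x \<in> verts T \<and> par T x < x) \<and>
     (\<forall>x. x \<notin> verts T \<longrightarrow> par T x = 0)"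

definition tedges :: "tree \<Rightarrow> (nat \<times> nat) set" where
  "tedges T = {(par T x, x) | x. x \<in> verts T \<and> x \<noteq> Min (verts T)}"

definition ancs :: "tree \<Rightarrow> nat \<Rightarrow> nat set" where
  "ancs T x = {a. (a, x) \<in> (tedges T)\<^sup>*}"

definition is_ancestor :: "tree \<Rightarrow> nat \<Rightarrow> nat \<Rightarrow> bool" where
  "is_ancestor T a x \<longleftrightarrow> x \<in> verts T \<and> a \<in> ancs T x"

text \<open>In the v-decomposition of T, the chain vertex whose component contains x
  (the deepest chain vertex that is an ancestor of x).\<close>
definition comp_root :: "tree \<Rightarrow> nat \<Rightarrow> nat \<Rightarrow> nat" where
  "comp_root T v x = Max (ancs T x \<inter> ancs T v)"

text \<open>Splice spl(T1,v1;T2,v2): the two root-to-v chains are merged into one increasing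
  chain; all other vertices keep their fathers (so the components of the decompositions
  stay attached at their chain vertices).\<close>
definition spl :: "tree \<Rightarrow> nat \<Rightarrow> tree \<Rightarrow> nat \<Rightarrow> tree" where
  "spl T1 v1 T2 v2 =
     (let C = ancs T1 v1 \<union> ancs T2 v2 in
      (verts T1 \<union> verts T2,
       \<lambda>x. if x \<in> C then (if x = Min C then 0 else Max {y \<in> C. y < x})
           else if x \<in> verts T1 then par T1 x
           else if x \<in> verts T2 then par T2 x else 0))"

definition chain_tree :: "nat set \<Rightarrow> tree" where
  "chain_tree B = (B, \<lambda>x. if x \<in> B \<and> x \<noteq> Min B then Max {y \<in> B. y < x} else 0)"

text \<open>Maxima of the blocks, in increasing order: mu P 1 < ... < mu P k, k = card P.\<close>
definition mu :: "nat set set \<Rightarrow> nat \<Rightarrow> nat" where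
  "mu P i = sorted_list_of_set (Max ` P) ! (i - 1)"

definition blk :: "nat set set \<Rightarrow> nat \<Rightarrow> nat set" where
  "blk P i = (THE B. B \<in> P \<and> Max B = mu P i)"

definition block_of :: "nat set set \<Rightarrow> nat \<Rightarrow> nat set" where
  "block_of P x = (THE B. B \<in> P \<and> x \<in> B)"

definition pi_increasing :: "nat set set \<Rightarrow> tree \<Rightarrow> bool" where
  "pi_increasing P T \<longleftrightarrow> inc_tree T \<and>
     verts T = \<Union>{B \<in> P. B \<subseteq> verts T} \<and>
     (\<forall>B \<in> P. B \<subseteq> verts T \<longrightarrow> (\<forall>i \<in> B. \<forall>j \<in> B. i < j \<longrightarrow> is_ancestor T i j))"

definition dep_nodes :: "nat set set \<Rightarrow> tree \<Rightarrow> nat set set" where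
  "dep_nodes P T = {B \<in> P. B \<subseteq> verts T}"

definition dep_edges :: "nat set set \<Rightarrow> tree \<Rightarrow> nat \<Rightarrow> (nat set \<times> nat set) set" where
  "dep_edges P T v = {(B, block_of P (comp_root T v (Max B))) | B.
       B \<in> dep_nodes P T \<and> Max B \<notin> ancs T v}"

definition dep_connected :: "nat set set \<Rightarrow> tree \<Rightarrow> nat \<Rightarrow> bool" where
  "dep_connected P T v \<longleftrightarrow>
     (\<forall>B1 \<in> dep_nodes P T. \<forall>B2 \<in> dep_nodes P T.
        (B1, B2) \<in> (dep_edges P T v \<union> (dep_edges P T v)\<inverse>)\<^sup>*)"

definition irreducible_tree :: "nat set set \<Rightarrow> tree \<Rightarrow> bool" where
  "irreducible_tree P T \<longleftrightarrow> dep_connected P T (Max (verts T))"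

abbreviation reducible_tree :: "nat set set \<Rightarrow> tree \<Rightarrow> bool" where
  "reducible_tree P T \<equiv> \<not> irreducible_tree P T"

text \<open>State: the trees tau_1, tau_2, ... (discarded trees are simply left in place and never
  used again), the vertex nu, and a flag recording whether tau_1 has been created by an
  internal splice at some previous stage.\<close>
type_synonym state = "(nat \<Rightarrow> tree) \<times> nat \<times> bool"

definition init_state :: "nat set set \<Rightarrow> state" where
  "init_state P = ((\<lambda>l. chain_tree (blk P l)), 1, False)"

definition stage :: "nat set set \<Rightarrow> (nat \<Rightarrow> nat) \<Rightarrow> state \<Rightarrow> nat \<Rightarrow> state" where
  "stage P c s i =
     (case s of (tau, nu, fl) \<Rightarrow>
       if c i \<in> verts (tau 1) \<or> c i \<in> verts (tau i)
       then (tau(1 := spl (tau i) (mu P i) (tau 1) nu), c i, True)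
       else (let j = (LEAST j. i < j \<and> c i \<in> verts (tau j)) in
             (tau(j := spl (tau i) (mu P i) (tau j) (c i)), nu, fl)))"

definition input_stage :: "nat set set \<Rightarrow> (nat \<Rightarrow> nat) \<Rightarrow> nat \<Rightarrow> state" where
  "input_stage P c i = foldl (stage P c) (init_state P) [2..<i]"

definition psi :: "nat set set \<Rightarrow> (nat \<Rightarrow> nat) \<Rightarrow> tree" where
  "psi P c = (let k = card P; (tau, nu, fl) = input_stage P c k in
              spl (tau k) (mu P k) (tau 1) nu)"

text \<open>The set C(pi) of sequences (c_2, ..., c_{k-1}), represented by functions
  (values outside 2..k-1 are irrelevant).\<close>
definition in_C :: "nat set set \<Rightarrow> (nat \<Rightarrow> nat) \<Rightarrow> bool" where
  "in_C P c \<longleftrightarrow> (\<forall>i. 2 \<le> i \<and> i \<le> card P - 1 \<longrightarrow> 1 \<le> c i \<and> c i \<le> mu P i)"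

end

theory Submission
  imports Defs
begin

text \<open>A splice merges the two root chains and leaves every other vertex hanging from the same
  chain vertex as before.  Hence the point where a vertex meets the chain to a vertex y of the
  spliced tree can be computed from the two original trees: on the same side it is the meet
  in that tree, across the sides it is the smaller of the two attachment points.  Splicing
  tau_i at its maximum into tau_1, whose vertices all lie below it, is then seen to keep every
  dependence edge on its own side, so the result is reducible.  Splicing tau_i into a tree
  tau_j with larger maximum M instead links every block of tau_i, directly or along its own
  dependence edges, to the block of the point where the chain to M leaves the merged chain;
  so irreducibility of tau_i and tau_j is inherited.  Carrying an invariant on the trees still
  in use through the stages gives the three claims.\<close>

lemma tedges_iff: "(y, x) \<in> tedges T \<longleftrightarrow> x \<in> verts T \<and> x \<noteq> Min (verts T) \<and> y = par T x"
  unfolding tedges_def by auto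

lemma ancs_rec:
  "ancs T x = (if x \<in> verts T \<and> x \<noteq> Min (verts T) then insert x (ancs T (par T x)) else {x})"
proof -
  have "(a, x) \<in> (tedges T)\<^sup>* \<longleftrightarrow>
      a = x \<or> (x \<in> verts T \<and> x \<noteq> Min (verts T) \<and> (a, par T x) \<in> (tedges T)\<^sup>*)" for a
    by (auto simp: tedges_iff elim: rtranclE intro: rtrancl_into_rtrancl)
  then show ?thesis unfolding ancs_def by auto
qed

lemma inc_treeD:
  assumes "inc_tree T"
  shows "finite (verts T)" "verts T \<noteq> {}" "0 \<notin> verts T" "par T (Min (verts T)) = 0"
    "\<And>x. x \<in> verts T \<Longrightarrow> x \<noteq> Min (verts T) \<Longrightarrow> par T x \<in> verts T \<and> par T x < x"
    "\<And>x. x \<notin> verts T \<Longrightarrow> par T x = 0"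
  using assms unfolding inc_tree_def by auto

lemma ancs_self [simp]: "x \<in> ancs T x"
  unfolding ancs_def by simp

lemma ancs_trans: "a \<in> ancs T b \<Longrightarrow> b \<in> ancs T x \<Longrightarrow> a \<in> ancs T x"
  unfolding ancs_def by auto

lemma ancs_outside: "x \<notin> verts T \<Longrightarrow> ancs T x = {x}"
  using ancs_rec[of T x] by simp

context
  fixes T assumes T: "inc_tree T"
begin

lemma ancs_subset_root:
  assumes "x \<in> verts T"
  shows "ancs T x \<subseteq> verts T \<and> Min (verts T) \<in> ancs T x \<and> (\<forall>a \<in> ancs T x. a \<le> x)"
  using assms
proof (induction x rule: less_induct)
  case (less x)
  show ?case
  proof (cases "x = Min (verts T)")
    case True
    then show ?thesis using ancs_rec[of T x] less.prems by simp
  next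
    case False
    with inc_treeD(5)[OF T] less.prems have p: "par T x \<in> verts T" "par T x < x" by auto
    from less.IH[OF p(2) p(1)] p False less.prems show ?thesis using ancs_rec[of T x] by auto
  qed
qed

lemma ancs_le: "a \<in> ancs T x \<Longrightarrow> a \<le> x"
  using ancs_subset_root ancs_outside by (cases "x \<in> verts T") auto

lemma ancs_subset_verts: "x \<in> verts T \<Longrightarrow> ancs T x \<subseteq> verts T"
  using ancs_subset_root by blast

lemma root_in_ancs: "x \<in> verts T \<Longrightarrow> Min (verts T) \<in> ancs T x"
  using ancs_subset_root by blast

lemma finite_ancs: "finite (ancs T x)"
  using finite_subset[OF ancs_subset_verts inc_treeD(1)[OF T]] ancs_outside[of x T]
  by (cases "x \<in> verts T") auto

lemma ancs_of_ancs:
  assumes "a \<in> ancs T x"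
  shows "ancs T a = {y \<in> ancs T x. y \<le> a}"
  using assms
proof (induction x rule: less_induct)
  case (less x)
  show ?case
  proof (cases "x \<in> verts T \<and> x \<noteq> Min (verts T)")
    case False
    then show ?thesis using less.prems ancs_rec[of T x] by auto
  next
    case True
    with inc_treeD(5)[OF T] have p: "par T x < x" by auto
    have ax: "ancs T x = insert x (ancs T (par T x))" using ancs_rec[of T x] True by simp
    show ?thesis
    proof (cases "a = x")
      case False
      then have a: "a \<in> ancs T (par T x)" using less.prems ax by auto
      then show ?thesis using less.IH[OF p a] ancs_le[OF a] ax p by auto
    qed (use ancs_le in auto)
  qed
qed

lemma ancs_between: "z \<in> ancs T x \<Longrightarrow> y \<in> ancs T x \<Longrightarrow> z \<le> y \<Longrightarrow> z \<in> ancs T y"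
  using ancs_of_ancs[of y x] by auto

lemma ancs_chain:
  assumes S: "S \<subseteq> verts T" "Min (verts T) \<in> S"
    and par_S: "\<And>x. x \<in> S \<Longrightarrow> x \<noteq> Min (verts T) \<Longrightarrow> par T x = Max {y \<in> S. y < x}"
    and "x \<in> S"
  shows "ancs T x = {y \<in> S. y \<le> x}"
  using assms(4)
proof (induction x rule: less_induct)
  case (less x)
  have fin: "finite S" using S inc_treeD(1)[OF T] finite_subset by blast
  have root_le: "Min (verts T) \<le> y" if "y \<in> S" for y
    using S that inc_treeD(1)[OF T] by auto
  show ?case
  proof (cases "x = Min (verts T)")
    case True
    then show ?thesis using ancs_rec[of T x] root_le less.prems by (auto intro: antisym)
  next
    case False
    define p where "p = Max {y \<in> S. y < x}"
    have ne: "{y \<in> S. y < x} \<noteq> {}" using S(2) root_le[OF less.prems] False by force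
    have p: "p \<in> S" "p < x" using Max_in[OF _ ne] fin unfolding p_def by auto
    have p_max: "y \<le> p" if "y \<in> S" "y < x" for y unfolding p_def using fin that by auto
    have "ancs T x = insert x (ancs T p)"
      using ancs_rec[of T x] False less.prems S par_S unfolding p_def by auto
    also have "\<dots> = {y \<in> S. y \<le> x}" using less.IH[OF p(2) p(1)] p p_max less.prems by force
    finally show ?thesis .
  qed
qed

lemma Max_verts_in: "Max (verts T) \<in> verts T"
  using inc_treeD(1,2)[OF T] by (rule Max_in)

lemma comp_root_in_ancs:
  assumes "x \<in> verts T" "v \<in> verts T"
  shows "comp_root T v x \<in> ancs T x" "comp_root T v x \<in> ancs T v"
proof -
  have ne: "ancs T x \<inter> ancs T v \<noteq> {}" using root_in_ancs assms by blast
  show "comp_root T v x \<in> ancs T x" "comp_root T v x \<in> ancs T v"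
    using Max_in[OF _ ne] finite_ancs unfolding comp_root_def by auto
qed

lemma comp_root_ge: "z \<in> ancs T x \<Longrightarrow> z \<in> ancs T v \<Longrightarrow> z \<le> comp_root T v x"
  using finite_ancs unfolding comp_root_def by auto

lemma comp_root_eq_self_iff:
  assumes "x \<in> verts T" "v \<in> verts T"
  shows "comp_root T v x = x \<longleftrightarrow> x \<in> ancs T v"
  using comp_root_in_ancs[OF assms] comp_root_ge[of x x v] ancs_le[of "comp_root T v x" x]
  by (metis ancs_self antisym)

end

lemma verts_spl: "verts (spl T1 v1 T2 v2) = verts T1 \<union> verts T2"
  unfolding spl_def verts_def Let_def by simp

locale tree_splice =
  fixes T1 v1 T2 v2
  assumes inc1: "inc_tree T1" and inc2: "inc_tree T2"
    and disjoint: "verts T1 \<inter> verts T2 = {}"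
    and v1: "v1 \<in> verts T1" and v2: "v2 \<in> verts T2"
begin

definition C where "C = ancs T1 v1 \<union> ancs T2 v2"

abbreviation T where "T \<equiv> spl T1 v1 T2 v2"

lemma swapped: "tree_splice T2 v2 T1 v1"
  using inc1 inc2 disjoint v1 v2 by unfold_locales auto

lemma spl_swap: "spl T2 v2 T1 v1 = T"
  using disjoint unfolding spl_def Let_def by (auto simp: fun_eq_iff Un_commute)

lemma par_spl:
  "par T x = (if x \<in> C then (if x = Min C then 0 else Max {y \<in> C. y < x})
              else if x \<in> verts T1 then par T1 x
              else if x \<in> verts T2 then par T2 x else 0)"
  unfolding spl_def par_def Let_def C_def by simp

lemma C_inter_left: "C \<inter> verts T1 = ancs T1 v1"
  and C_inter_right: "C \<inter> verts T2 = ancs T2 v2"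
  and C_subset: "C \<subseteq> verts T"
  unfolding C_def verts_spl
  using ancs_subset_verts[OF inc1 v1] ancs_subset_verts[OF inc2 v2] disjoint by blast+

lemma finite_verts_spl: "finite (verts T)"
  using inc_treeD(1)[OF inc1] inc_treeD(1)[OF inc2] verts_spl by simp

lemma finite_C: "finite C"
  using C_subset finite_verts_spl finite_subset by blast

lemma root_spl: "Min (verts T) \<in> C" "Min C = Min (verts T)"
proof -
  have "Min (verts T) = min (Min (verts T1)) (Min (verts T2))"
    unfolding verts_spl using inc_treeD(1,2)[OF inc1] inc_treeD(1,2)[OF inc2] by (simp add: Min_Un)
  moreover have "Min (verts T1) \<in> C" "Min (verts T2) \<in> C"
    unfolding C_def using root_in_ancs[OF inc1 v1] root_in_ancs[OF inc2 v2] by auto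
  ultimately show root: "Min (verts T) \<in> C" by (simp add: min_def)
  show "Min C = Min (verts T)"
    using C_subset finite_C finite_verts_spl root by (intro antisym) (auto intro: Min_antimono)
qed

lemma inc_tree_spl: "inc_tree T"
proof -
  have chain: "par T x \<in> verts T \<and> par T x < x"
    if x: "x \<in> C" "x \<noteq> Min (verts T)" for x
  proof -
    have "{y \<in> C. y < x} \<noteq> {}"
      using x root_spl finite_C
      by (metis (mono_tags) Min_le empty_iff le_neq_implies_less mem_Collect_eq)
    then have "Max {y \<in> C. y < x} \<in> {y \<in> C. y < x}" using finite_C by (intro Max_in) auto
    then show ?thesis using x root_spl C_subset unfolding par_spl by auto
  qed
  have "Min (verts T1) \<in> C" "Min (verts T2) \<in> C"
    unfolding C_def using root_in_ancs[OF inc1 v1] root_in_ancs[OF inc2 v2] by auto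
  then have off_chain: "par T x \<in> verts T \<and> par T x < x"
    if "x \<in> verts T" "x \<notin> C" for x
    using that inc_treeD(5)[OF inc1, of x] inc_treeD(5)[OF inc2, of x]
    unfolding par_spl verts_spl by auto
  have "par T x = 0" if "x \<notin> verts T" for x
    using that C_subset unfolding par_spl verts_spl by auto
  then show ?thesis
    unfolding inc_tree_def using chain off_chain finite_verts_spl root_spl v1
      inc_treeD(3)[OF inc1] inc_treeD(3)[OF inc2]
    by (auto simp: par_spl verts_spl)
qed

lemma ancs_spl_chain: "y \<in> C \<Longrightarrow> ancs T y = {z \<in> C. z \<le> y}"
  by (rule ancs_chain[OF inc_tree_spl]) (use C_subset root_spl in \<open>auto simp: par_spl\<close>)

lemma ancs_spl_left:
  "x \<in> verts T1 \<Longrightarrow> ancs T x = ancs T1 x \<union> {z \<in> ancs T2 v2. z < comp_root T1 v1 x}"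
proof (induction x rule: less_induct)
  case (less x)
  show ?case
  proof (cases "x \<in> C")
    case True
    then have x: "x \<in> ancs T1 v1" using C_inter_left less.prems by blast
    have "x \<notin> ancs T2 v2" using less.prems C_inter_right disjoint by blast
    then have "{z \<in> ancs T2 v2. z \<le> x} = {z \<in> ancs T2 v2. z < x}" by (auto simp: order_le_less)
    then have "ancs T x = ancs T1 x \<union> {z \<in> ancs T2 v2. z < x}"
      unfolding ancs_spl_chain[OF True] ancs_of_ancs[OF inc1 x] C_def by blast
    then show ?thesis using comp_root_eq_self_iff[OF inc1 less.prems v1] x by simp
  next
    case False
    have "Min (verts T1) \<in> C" unfolding C_def using root_in_ancs[OF inc1 v1] by auto
    then have "x \<noteq> Min (verts T1)" using False by auto
    then have p: "par T1 x \<in> verts T1" "par T1 x < x" using inc_treeD(5)[OF inc1 less.prems] by auto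
    have "x \<noteq> Min (verts T)" using False root_spl by auto
    then have ancs_T: "ancs T x = insert x (ancs T (par T1 x))"
      using ancs_rec[of T x] less.prems False verts_spl par_spl by simp
    have ancs_T1: "ancs T1 x = insert x (ancs T1 (par T1 x))"
      using ancs_rec[of T1 x] \<open>x \<noteq> Min (verts T1)\<close> less.prems by simp
    have "x \<notin> ancs T1 v1" using False C_def by auto
    then have "ancs T1 x \<inter> ancs T1 v1 = ancs T1 (par T1 x) \<inter> ancs T1 v1" using ancs_T1 by auto
    then have "comp_root T1 v1 x = comp_root T1 v1 (par T1 x)" unfolding comp_root_def by simp
    then show ?thesis using ancs_T ancs_T1 less.IH[OF p(2) p(1)] by auto
  qed
qed

lemma ancs_spl_right:
  "x \<in> verts T2 \<Longrightarrow> ancs T x = ancs T2 x \<union> {z \<in> ancs T1 v1. z < comp_root T2 v2 x}"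
  using tree_splice.ancs_spl_left[OF swapped] spl_swap by simp

lemma comp_root_spl_left:
  assumes x: "x \<in> verts T1" and y: "y \<in> verts T1"
  shows "comp_root T y x = comp_root T1 y x"
  unfolding comp_root_def[of T]
proof (rule Max_eqI)
  let ?e = "comp_root T1 v1 x" and ?f = "comp_root T1 v1 y" and ?m = "comp_root T1 y x"
  have ef: "?e \<in> ancs T1 x" "?e \<in> ancs T1 v1" "?f \<in> ancs T1 y" "?f \<in> ancs T1 v1"
    using comp_root_in_ancs[OF inc1] x y v1 by auto
  have "min ?e ?f \<in> ancs T1 x \<inter> ancs T1 y"
    using ef ancs_between[OF inc1] ancs_trans by (metis IntI min_def nat_le_linear)
  then have min_le: "min ?e ?f \<le> ?m" using comp_root_ge[OF inc1] by blast
  show "finite (ancs T x \<inter> ancs T y)" using finite_ancs[OF inc_tree_spl] by blast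
  show "?m \<in> ancs T x \<inter> ancs T y"
    using comp_root_in_ancs[OF inc1 x y] ancs_spl_left x y by auto
  fix z assume z: "z \<in> ancs T x \<inter> ancs T y"
  show "z \<le> ?m"
  proof (cases "z \<in> verts T1")
    case True
    then show ?thesis
      using z ancs_spl_left[OF x] ancs_spl_left[OF y] ancs_subset_verts[OF inc2 v2] disjoint
        comp_root_ge[OF inc1]
      by blast
  next
    case False
    then show ?thesis
      using z ancs_spl_left[OF x] ancs_spl_left[OF y] ancs_subset_verts[OF inc1] x y min_le
      by fastforce
  qed
qed

lemma comp_root_spl_right:
  "x \<in> verts T2 \<Longrightarrow> y \<in> verts T2 \<Longrightarrow> comp_root T y x = comp_root T2 y x"
  using tree_splice.comp_root_spl_left[OF swapped] spl_swap by simp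

lemma comp_root_spl_cross:
  assumes x: "x \<in> verts T1" and y: "y \<in> verts T2"
  shows "comp_root T y x = min (comp_root T1 v1 x) (comp_root T2 v2 y)"
  unfolding comp_root_def[of T]
proof (rule Max_eqI)
  let ?e = "comp_root T1 v1 x" and ?f = "comp_root T2 v2 y"
  have e: "?e \<in> ancs T1 x" "?e \<in> ancs T1 v1" using comp_root_in_ancs[OF inc1 x v1] by auto
  have f: "?f \<in> ancs T2 y" "?f \<in> ancs T2 v2" using comp_root_in_ancs[OF inc2 y v2] by auto
  have sides: "ancs T1 x \<subseteq> verts T1" "ancs T1 v1 \<subseteq> verts T1"
    "ancs T2 y \<subseteq> verts T2" "ancs T2 v2 \<subseteq> verts T2"
    using ancs_subset_verts[OF inc1] ancs_subset_verts[OF inc2] x y v1 v2 by auto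
  have "?e < ?f \<or> ?f < ?e"
    using e f sides disjoint by (metis disjoint_iff linorder_neqE_nat subsetD)
  then show "min ?e ?f \<in> ancs T x \<inter> ancs T y"
    unfolding ancs_spl_left[OF x] ancs_spl_right[OF y] using e f by (auto simp: min_def)
  show "finite (ancs T x \<inter> ancs T y)" using finite_ancs[OF inc_tree_spl] by blast
  fix z assume z: "z \<in> ancs T x \<inter> ancs T y"
  show "z \<le> min ?e ?f"
  proof (cases "z \<in> verts T1")
    case True
    then have "z \<in> ancs T1 x" "z \<in> ancs T1 v1" "z < ?f"
      using z sides disjoint unfolding ancs_spl_left[OF x] ancs_spl_right[OF y] by blast+
    then show ?thesis using comp_root_ge[OF inc1] by fastforce
  next
    case False
    then have "z \<in> ancs T2 y" "z \<in> ancs T2 v2" "z < ?e"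
      using z sides unfolding ancs_spl_left[OF x] ancs_spl_right[OF y] by blast+
    then show ?thesis using comp_root_ge[OF inc2] by fastforce
  qed
qed

lemma comp_root_spl_cross':
  "x \<in> verts T2 \<Longrightarrow> y \<in> verts T1 \<Longrightarrow> comp_root T y x = min (comp_root T2 v2 x) (comp_root T1 v1 y)"
  using tree_splice.comp_root_spl_cross[OF swapped] spl_swap by simp

end

lemma rtrancl_Un_converse_invariant:
  assumes "(a, b) \<in> (E \<union> E\<inverse>)\<^sup>*" and "\<And>x y. (x, y) \<in> E \<Longrightarrow> Q x = Q y"
  shows "Q a = Q b"
  using assms(1) by (induction rule: rtrancl_induct) (auto dest: assms(2))

lemma dep_connectedI:
  assumes "D \<in> dep_nodes P T"
    and "\<And>B. B \<in> dep_nodes P T \<Longrightarrow> (B, D) \<in> (dep_edges P T v \<union> (dep_edges P T v)\<inverse>)\<^sup>*"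
  shows "dep_connected P T v"
  unfolding dep_connected_def
  using assms sym_rtrancl[OF sym_Un_converse] rtrancl_trans by (metis symD)

locale interval_partition =
  fixes r :: nat and P :: "nat set set"
  assumes partition: "partition_on {1..r} P"
begin

lemma Union_partition: "\<Union>P = {1..r}"
  using partition_onD1[OF partition] by simp

lemma block_finite: "B \<in> P \<Longrightarrow> finite B"
  and block_nonempty: "B \<in> P \<Longrightarrow> B \<noteq> {}"
  and block_subset: "B \<in> P \<Longrightarrow> B \<subseteq> {1..r}"
  using partition_onD1[OF partition] partition_onD3[OF partition] finite_subset
  by (metis Sup_upper finite_atLeastAtMost)+

lemma Max_block: "B \<in> P \<Longrightarrow> Max B \<in> B"
  using block_finite block_nonempty by (intro Max_in)

lemma block_of_eq: "x \<in> B \<Longrightarrow> B \<in> P \<Longrightarrow> block_of P x = B"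
  unfolding block_of_def using partition_onD2[OF partition]
  by (intro the_equality) (auto simp: disjoint_def)

lemma block_of_vertex:
  assumes "pi_increasing P T" "x \<in> verts T"
  shows "block_of P x \<in> P" "x \<in> block_of P x" "block_of P x \<subseteq> verts T"
proof -
  obtain B where "B \<in> P" "B \<subseteq> verts T" "x \<in> B"
    using assms unfolding pi_increasing_def by blast
  then show "block_of P x \<in> P" "x \<in> block_of P x" "block_of P x \<subseteq> verts T"
    using block_of_eq by auto
qed

lemma pi_increasing_inc_tree: "pi_increasing P T \<Longrightarrow> inc_tree T"
  unfolding pi_increasing_def by simp

lemma pi_increasing_ancs:
  assumes "pi_increasing P T" "B \<in> P" "B \<subseteq> verts T" "i \<in> B" "j \<in> B" "i \<le> j"
  shows "i \<in> ancs T j"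
proof (cases "i = j")
  case False
  then show ?thesis using assms unfolding pi_increasing_def is_ancestor_def by auto
qed simp

lemma Max_dep_node: "B \<in> dep_nodes P T \<Longrightarrow> Max B \<in> verts T"
  using Max_block unfolding dep_nodes_def by blast

text \<open>The condition Max B \<notin> ancs T v of the definition, expressed through comp_root,
  which is what the splice lemmas compute.\<close>
lemma dep_edges_iff:
  assumes "inc_tree T" "v \<in> verts T"
  shows "(B, B') \<in> dep_edges P T v \<longleftrightarrow>
    B \<in> dep_nodes P T \<and> comp_root T v (Max B) \<noteq> Max B \<and> B' = block_of P (comp_root T v (Max B))"
  unfolding dep_edges_def using comp_root_eq_self_iff[OF assms(1) Max_dep_node assms(2)] by blast

end

locale pi_splice = tree_splice + interval_partition +
  assumes pi1: "pi_increasing P T1" and pi2: "pi_increasing P T2"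
begin

lemma block_of_spl:
  assumes "x \<in> verts T"
  shows "block_of P x \<in> P" "x \<in> block_of P x" "block_of P x \<subseteq> verts T1 \<or> block_of P x \<subseteq> verts T2"
  using assms block_of_vertex[OF pi1, of x] block_of_vertex[OF pi2, of x] unfolding verts_spl
  by auto

lemma block_subset_left_iff:
  assumes "x \<in> verts T"
  shows "block_of P x \<subseteq> verts T1 \<longleftrightarrow> x \<in> verts T1"
  using block_of_spl[OF assms] disjoint by blast

lemma block_side:
  assumes "B \<in> P" "B \<subseteq> verts T"
  shows "B \<subseteq> verts T1 \<or> B \<subseteq> verts T2"
proof -
  have "Max B \<in> verts T" using assms Max_block by blast
  then show ?thesis using block_of_spl(3) block_of_eq[OF Max_block[OF assms(1)] assms(1)] by metis
qed

lemma pi_increasing_spl: "pi_increasing P T"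
proof -
  have "verts T \<subseteq> \<Union>{B \<in> P. B \<subseteq> verts T}"
  proof
    fix x assume "x \<in> verts T"
    with block_of_spl[OF this] show "x \<in> \<Union>{B \<in> P. B \<subseteq> verts T}"
      unfolding verts_spl by blast
  qed
  moreover have "i \<in> ancs T j"
    if B: "B \<in> P" "B \<subseteq> verts T" "i \<in> B" "j \<in> B" "i < j" for B i j
    using block_side[OF B(1,2)]
  proof
    assume "B \<subseteq> verts T1"
    then have "i \<in> ancs T1 j" "j \<in> verts T1"
      using pi_increasing_ancs[OF pi1 B(1) _ B(3,4)] B by auto
    then show ?thesis using ancs_spl_left[of j] by blast
  next
    assume "B \<subseteq> verts T2"
    then have "i \<in> ancs T2 j" "j \<in> verts T2"
      using pi_increasing_ancs[OF pi2 B(1) _ B(3,4)] B by auto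
    then show ?thesis using ancs_spl_right[of j] by blast
  qed
  ultimately show ?thesis unfolding pi_increasing_def is_ancestor_def using inc_tree_spl by blast
qed

lemma comp_root_spl_v1_side:
  assumes "v2 < v1" "x \<in> verts T"
  shows "comp_root T v1 x \<in> verts T1 \<longleftrightarrow> x \<in> verts T1"
proof (cases "x \<in> verts T1")
  case True
  then show ?thesis
    using comp_root_spl_left[OF True v1] comp_root_in_ancs[OF inc1 True v1]
      ancs_subset_verts[OF inc1 v1] by auto
next
  case False
  then have x: "x \<in> verts T2" using assms(2) verts_spl by auto
  have "comp_root T2 v2 x \<le> v2"
    using comp_root_in_ancs[OF inc2 x v2] ancs_le[OF inc2] by blast
  then have "comp_root T v1 x = comp_root T2 v2 x"
    using comp_root_spl_cross'[OF x v1] comp_root_eq_self_iff[OF inc1 v1 v1] assms(1) by simp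
  then show ?thesis
    using False comp_root_in_ancs[OF inc2 x v2] ancs_subset_verts[OF inc2 v2] disjoint by auto
qed

text \<open>The internal splice: seen from v1, every vertex stays attached to the merged chain on
  its own side, so no dependence edge joins a block of T1 to a block of T2.\<close>
lemma reducible_spl:
  assumes max: "Max (verts T) = v1"
  shows "reducible_tree P T"
proof
  assume irr: "irreducible_tree P T"
  have v: "v1 \<in> verts T" "v2 \<in> verts T" using v1 v2 verts_spl by auto
  have "v2 < v1"
    using Max_ge[OF finite_verts_spl v(2)] max v1 v2 disjoint by (auto simp: order_le_less)
  have edge_side: "B \<subseteq> verts T1 \<longleftrightarrow> B' \<subseteq> verts T1" if "(B, B') \<in> dep_edges P T v1" for B B'
  proof -
    from that have B: "B \<in> dep_nodes P T" "B' = block_of P (comp_root T v1 (Max B))"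
      using dep_edges_iff[OF inc_tree_spl v(1)] by auto
    have MB: "Max B \<in> verts T" using Max_dep_node[OF B(1)] .
    then have "comp_root T v1 (Max B) \<in> verts T"
      using comp_root_in_ancs[OF inc_tree_spl MB v(1)] ancs_subset_verts[OF inc_tree_spl v(1)]
      by blast
    moreover have "B = block_of P (Max B)"
      using B(1) block_of_eq[OF Max_block] unfolding dep_nodes_def by auto
    ultimately show ?thesis
      using B(2) MB block_subset_left_iff comp_root_spl_v1_side[OF \<open>v2 < v1\<close>] by metis
  qed
  have "block_of P v1 \<in> dep_nodes P T" "block_of P v2 \<in> dep_nodes P T"
    using block_of_vertex[OF pi_increasing_spl] v unfolding dep_nodes_def by auto
  with irr have "(block_of P v1, block_of P v2) \<in> (dep_edges P T v1 \<union> (dep_edges P T v1)\<inverse>)\<^sup>*"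
    unfolding irreducible_tree_def dep_connected_def max by blast
  from rtrancl_Un_converse_invariant[where Q = "\<lambda>B. B \<subseteq> verts T1", OF this edge_side]
  show False
    using block_subset_left_iff[OF v(1)] block_subset_left_iff[OF v(2)] v1 v2 disjoint by blast
qed

end

lemma (in interval_partition) pi_increasing_reducible_spl_Max:
  assumes pi1: "pi_increasing P T1" and pi2: "pi_increasing P T2"
    and disjoint: "verts T1 \<inter> verts T2 = {}" and v2: "v2 \<in> verts T2"
    and below: "\<forall>x \<in> verts T2. x < Max (verts T1)"
  shows "pi_increasing P (spl T1 (Max (verts T1)) T2 v2)
      \<and> reducible_tree P (spl T1 (Max (verts T1)) T2 v2)"
proof -
  have inc: "inc_tree T1" "inc_tree T2" using pi1 pi2 by (simp_all add: pi_increasing_inc_tree)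
  interpret pi_splice T1 "Max (verts T1)" T2 v2 r P
    using inc Max_verts_in[OF inc(1)] assms partition
    by unfold_locales (auto simp: interval_partition_def)
  have "Max (verts T) = Max (verts T1)"
    using Max_verts_in[OF inc(1)] Max_ge[OF inc_treeD(1)[OF inc(1)]] below
    by (intro Max_eqI[OF finite_verts_spl]) (auto simp: verts_spl)
  then show ?thesis using pi_increasing_spl reducible_spl by simp
qed

text \<open>The external splice, with d the point where the chain to the maximum M of T2 leaves
  the merged chain.\<close>
locale external_splice = pi_splice +
  assumes irr1: "irreducible_tree P T1" and irr2: "irreducible_tree P T2"
    and max1: "Max (verts T1) = v1" and max_less: "v1 < Max (verts T2)" and v2_less: "v2 < v1"
begin

definition M where "M = Max (verts T2)"
definition d where "d = comp_root T2 v2 M"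

lemma M_in: "M \<in> verts T2"
  unfolding M_def using inc_treeD(1,2)[OF inc2] by (rule Max_in)

lemma M_in_spl: "M \<in> verts T"
  using M_in verts_spl by simp

lemma Max_verts_spl: "Max (verts T) = M"
proof (rule Max_eqI[OF finite_verts_spl _ M_in_spl])
  fix x assume "x \<in> verts T"
  then show "x \<le> M"
    using Max_ge[OF inc_treeD(1)[OF inc1]] Max_ge[OF inc_treeD(1)[OF inc2]] max1 max_less
    unfolding verts_spl M_def by fastforce
qed

lemma d_in: "d \<in> verts T2" and d_less: "d < v1"
  using comp_root_in_ancs[OF inc2 M_in v2] ancs_subset_verts[OF inc2 v2] ancs_le[OF inc2] v2_less
  unfolding d_def by fastforce+

lemma comp_root_M_left: "x \<in> verts T1 \<Longrightarrow> comp_root T M x = min (comp_root T1 v1 x) d"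
  using comp_root_spl_cross[OF _ M_in] unfolding d_def .

lemma dep_edges_right_subset: "dep_edges P T2 M \<subseteq> dep_edges P T M"
proof
  fix p assume "p \<in> dep_edges P T2 M"
  moreover obtain B B' where p: "p = (B, B')" by fastforce
  ultimately have "B \<in> dep_nodes P T2" "comp_root T2 M (Max B) \<noteq> Max B"
    "B' = block_of P (comp_root T2 M (Max B))"
    using dep_edges_iff[OF inc2 M_in] by auto
  moreover have "dep_nodes P T2 \<subseteq> dep_nodes P T" unfolding dep_nodes_def verts_spl by auto
  ultimately show "p \<in> dep_edges P T M"
    unfolding p dep_edges_iff[OF inc_tree_spl M_in_spl]
    using comp_root_spl_right[OF Max_dep_node M_in] by auto
qed

lemma edge_to_d:
  assumes B: "B \<in> dep_nodes P T1" and less: "d < comp_root T1 v1 (Max B)"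
  shows "(B, block_of P d) \<in> dep_edges P T M"
proof -
  have MB: "Max B \<in> verts T1" using Max_dep_node[OF B] .
  have "comp_root T1 v1 (Max B) \<le> Max B"
    using comp_root_in_ancs[OF inc1 MB v1] ancs_le[OF inc1] by blast
  then have "comp_root T M (Max B) = d" "d \<noteq> Max B"
    using comp_root_M_left[OF MB] less by auto
  moreover have "B \<in> dep_nodes P T" using B unfolding dep_nodes_def verts_spl by auto
  ultimately show ?thesis
    unfolding dep_edges_iff[OF inc_tree_spl M_in_spl] by simp
qed

text \<open>Along an edge of T1 the attachment point of the block maximum can only grow, since it lies
  in the target block; so once it has passed d, both ends are linked to the block of d.\<close>
lemma dep_edge_left:
  assumes "(B, B') \<in> dep_edges P T1 v1"
  shows "(B, B') \<in> dep_edges P T M \<or>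
    (B, block_of P d) \<in> dep_edges P T M \<and> (B', block_of P d) \<in> dep_edges P T M"
proof -
  let ?e = "comp_root T1 v1 (Max B)"
  have B: "B \<in> dep_nodes P T1" "?e \<noteq> Max B" "B' = block_of P ?e"
    using assms dep_edges_iff[OF inc1 v1] by auto
  have MB: "Max B \<in> verts T1" using Max_dep_node[OF B(1)] .
  have e: "?e \<in> ancs T1 v1" "?e \<in> verts T1"
    using comp_root_in_ancs[OF inc1 MB v1] ancs_subset_verts[OF inc1 v1] by auto
  show ?thesis
  proof (cases "?e \<le> d")
    case True
    then have "comp_root T M (Max B) = ?e" using comp_root_M_left[OF MB] by simp
    moreover have "B \<in> dep_nodes P T" using B(1) unfolding dep_nodes_def verts_spl by auto
    ultimately show ?thesis
      using B unfolding dep_edges_iff[OF inc_tree_spl M_in_spl] by simp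
  next
    case False
    have B': "B' \<in> P" "?e \<in> B'" "B' \<subseteq> verts T1" using block_of_vertex[OF pi1 e(2)] B(3) by auto
    then have "?e \<in> ancs T1 (Max B')"
      using pi_increasing_ancs[OF pi1 B'(1,3,2) Max_block] Max_ge[OF block_finite] by blast
    then have "?e \<le> comp_root T1 v1 (Max B')" using comp_root_ge[OF inc1] e(1) by blast
    moreover have "B' \<in> dep_nodes P T1" using B' unfolding dep_nodes_def by simp
    ultimately show ?thesis using edge_to_d B(1) False by simp
  qed
qed

lemma irreducible_spl: "irreducible_tree P T"
proof -
  let ?E = "dep_edges P T M" and ?D = "block_of P d"
  let ?R = "(?E \<union> ?E\<inverse>)\<^sup>*"
  have D: "?D \<in> dep_nodes P T2" using block_of_vertex[OF pi2 d_in] unfolding dep_nodes_def by auto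
  have right: "(B, ?D) \<in> ?R" if "B \<in> dep_nodes P T2" for B
  proof -
    have "(B, ?D) \<in> (dep_edges P T2 M \<union> (dep_edges P T2 M)\<inverse>)\<^sup>*"
      using irr2 D that unfolding irreducible_tree_def dep_connected_def M_def by blast
    moreover have "dep_edges P T2 M \<union> (dep_edges P T2 M)\<inverse> \<subseteq> ?E \<union> ?E\<inverse>"
      using dep_edges_right_subset by blast
    ultimately show ?thesis using rtrancl_mono by blast
  qed
  let ?B1 = "block_of P v1"
  have B1: "?B1 \<in> dep_nodes P T1" using block_of_vertex[OF pi1 v1] unfolding dep_nodes_def by auto
  have "Max ?B1 = v1"
    using block_of_vertex[OF pi1 v1] Max_ge[OF inc_treeD(1)[OF inc1]] max1 block_finite
    by (intro Max_eqI) auto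
  then have "(?B1, ?D) \<in> ?E"
    using edge_to_d[OF B1] d_less comp_root_eq_self_iff[OF inc1 v1 v1] by simp
  then have B1_D: "(?B1, ?D) \<in> ?R" by blast
  have edge_inv: "(B, ?D) \<in> ?R \<longleftrightarrow> (B', ?D) \<in> ?R" if "(B, B') \<in> dep_edges P T1 v1" for B B'
    using dep_edge_left[OF that]
  proof
    assume "(B, B') \<in> ?E"
    then have "(B, B') \<in> ?R" "(B', B) \<in> ?R" by blast+
    then show ?thesis using rtrancl_trans by metis
  qed blast
  have left: "(B, ?D) \<in> ?R" if "B \<in> dep_nodes P T1" for B
  proof -
    have "(?B1, B) \<in> (dep_edges P T1 v1 \<union> (dep_edges P T1 v1)\<inverse>)\<^sup>*"
      using irr1 B1 that unfolding irreducible_tree_def dep_connected_def max1 by blast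
    from rtrancl_Un_converse_invariant[where Q = "\<lambda>B. (B, ?D) \<in> ?R", OF this edge_inv]
    show ?thesis using B1_D by blast
  qed
  have "dep_nodes P T \<subseteq> dep_nodes P T1 \<union> dep_nodes P T2"
    using block_side unfolding dep_nodes_def by blast
  moreover have "?D \<in> dep_nodes P T" using D unfolding dep_nodes_def verts_spl by auto
  ultimately show ?thesis
    unfolding irreducible_tree_def Max_verts_spl using left right by (intro dep_connectedI) blast+
qed

end

lemma (in interval_partition) pi_increasing_irreducible_spl_Max:
  assumes pi1: "pi_increasing P T1" and pi2: "pi_increasing P T2"
    and irr1: "irreducible_tree P T1" and irr2: "irreducible_tree P T2"
    and disjoint: "verts T1 \<inter> verts T2 = {}" and v2: "v2 \<in> verts T2"
    and less: "v2 < Max (verts T1)" "Max (verts T1) < Max (verts T2)"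
  shows "pi_increasing P (spl T1 (Max (verts T1)) T2 v2)
      \<and> irreducible_tree P (spl T1 (Max (verts T1)) T2 v2)
    \<and> Max (verts (spl T1 (Max (verts T1)) T2 v2)) = Max (verts T2)"
proof -
  have inc: "inc_tree T1" "inc_tree T2" using pi1 pi2 by (simp_all add: pi_increasing_inc_tree)
  interpret external_splice T1 "Max (verts T1)" T2 v2 r P
    using inc Max_verts_in[OF inc(1)] assms partition
    by unfold_locales (auto simp: interval_partition_def)
  show ?thesis using pi_increasing_spl irreducible_spl Max_verts_spl unfolding M_def by simp
qed

lemma verts_chain_tree [simp]: "verts (chain_tree B) = B"
  by (simp add: chain_tree_def verts_def)

lemma inc_tree_chain_tree: "finite B \<Longrightarrow> B \<noteq> {} \<Longrightarrow> 0 \<notin> B \<Longrightarrow> inc_tree (chain_tree B)"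
proof -
  assume B: "finite B" "B \<noteq> {}" "0 \<notin> B"
  have "Max {y \<in> B. y < x} \<in> {y \<in> B. y < x}" if "x \<in> B" "x \<noteq> Min B" for x
  proof (rule Max_in)
    show "{y \<in> B. y < x} \<noteq> {}"
      using that B Min_le[OF B(1)] Min_in[OF B(1,2)] le_neq_implies_less by blast
  qed (use B in simp)
  then show ?thesis unfolding inc_tree_def chain_tree_def verts_def par_def using B by auto
qed

lemma ancs_chain_tree:
  "finite B \<Longrightarrow> B \<noteq> {} \<Longrightarrow> 0 \<notin> B \<Longrightarrow> x \<in> B \<Longrightarrow> ancs (chain_tree B) x = {y \<in> B. y \<le> x}"
  by (rule ancs_chain[OF inc_tree_chain_tree]) (auto simp: chain_tree_def verts_def par_def)

context interval_partition
begin

lemma finite_partition: "finite P"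
  using Union_partition by (metis finite_UnionD finite_atLeastAtMost)

lemma inj_on_Max: "inj_on Max P"
  by (rule inj_onI) (metis Max_block block_of_eq)

lemma sorted_maxima:
  "length (sorted_list_of_set (Max ` P)) = card P"
  "sorted_wrt (<) (sorted_list_of_set (Max ` P))"
  "set (sorted_list_of_set (Max ` P)) = Max ` P"
  using finite_partition inj_on_Max by (auto simp: card_image)

lemma mu_in: "1 \<le> i \<Longrightarrow> i \<le> card P \<Longrightarrow> mu P i \<in> Max ` P"
  unfolding mu_def using sorted_maxima
  by (metis Suc_le_eq Suc_pred' nth_mem not_one_le_zero less_le_trans zero_less_one)

lemma mu_strict_mono: "1 \<le> i \<Longrightarrow> i < j \<Longrightarrow> j \<le> card P \<Longrightarrow> mu P i < mu P j"
  unfolding mu_def using sorted_maxima sorted_wrt_nth_less[OF sorted_maxima(2), of "i - 1" "j - 1"]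
  by simp

lemma mu_surj: "m \<in> Max ` P \<Longrightarrow> \<exists>i. 1 \<le> i \<and> i \<le> card P \<and> mu P i = m"
proof -
  assume "m \<in> Max ` P"
  then obtain n where "n < card P" "sorted_list_of_set (Max ` P) ! n = m"
    using sorted_maxima by (metis in_set_conv_nth)
  then show ?thesis unfolding mu_def by (intro exI[of _ "Suc n"]) auto
qed

lemma blk: "1 \<le> i \<Longrightarrow> i \<le> card P \<Longrightarrow> blk P i \<in> P \<and> Max (blk P i) = mu P i"
proof -
  assume "1 \<le> i" "i \<le> card P"
  from mu_in[OF this] obtain B where B: "B \<in> P" "Max B = mu P i" by auto
  have "blk P i = B"
    unfolding blk_def using B inj_onD[OF inj_on_Max] by (intro the_equality) auto
  then show ?thesis using B by simp
qed

lemma mu_le: "1 \<le> i \<Longrightarrow> i \<le> card P \<Longrightarrow> mu P i \<le> r"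
  using blk Max_block block_subset by fastforce

lemma blk_image: "blk P ` {1..card P} = P"
proof
  show "P \<subseteq> blk P ` {1..card P}"
  proof
    fix B assume "B \<in> P"
    then obtain l where "1 \<le> l" "l \<le> card P" "mu P l = Max B" using mu_surj by blast
    then show "B \<in> blk P ` {1..card P}"
      using blk \<open>B \<in> P\<close> inj_on_Max by (metis atLeastAtMost_iff image_eqI inj_onD)
  qed
qed (use blk in auto)

lemma disjoint_blk: "disjoint_family_on (blk P) {1..card P}"
  unfolding disjoint_family_on_def
  using blk mu_strict_mono partition_onD2[OF partition]
  by (metis atLeastAtMost_iff disjointD nat_neq_iff)

lemma block_subset_block_eq: "B \<in> P \<Longrightarrow> B' \<in> P \<Longrightarrow> B' \<subseteq> B \<Longrightarrow> B' = B"
  using block_nonempty partition_onD2[OF partition] by (metis disjointD inf.absorb1)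

lemma pi_increasing_chain_tree: "B \<in> P \<Longrightarrow> pi_increasing P (chain_tree B)"
proof -
  assume B: "B \<in> P"
  have fin: "finite B" "B \<noteq> {}" "0 \<notin> B"
    using block_finite[OF B] block_nonempty[OF B] block_subset[OF B] by fastforce+
  have "i \<in> ancs (chain_tree B) j" if "B' \<in> P" "B' \<subseteq> B" "i \<in> B'" "j \<in> B'" "i < j" for B' i j
    using block_subset_block_eq[OF B that(1,2)] that ancs_chain_tree[OF fin, of j] by auto
  then show ?thesis
    unfolding pi_increasing_def is_ancestor_def
    using inc_tree_chain_tree[OF fin] block_subset_block_eq[OF B] B by auto
qed

lemma irreducible_chain_tree:
  assumes "B \<in> P"
  shows "irreducible_tree P (chain_tree B)"
proof -
  have "dep_nodes P (chain_tree B) = {B}"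
    using assms block_subset_block_eq unfolding dep_nodes_def by auto
  then show ?thesis unfolding irreducible_tree_def dep_connected_def by simp
qed

end

lemma disjoint_family_on_merge:
  assumes disj: "disjoint_family_on A J" and ab: "a \<in> J" "b \<in> J" "a \<noteq> b"
    and merged: "A' a = A a \<union> A b" and other: "\<And>j. j \<noteq> a \<Longrightarrow> A' j = A j"
  shows "disjoint_family_on A' (J - {b})" "(\<Union>j\<in>J - {b}. A' j) = (\<Union>j\<in>J. A j)"
proof -
  have "A' m \<inter> A' n = {}" if "m \<in> J - {b}" "n \<in> J - {b}" "m \<noteq> n" for m n
  proof (cases "m = a \<or> n = a")
    case True
    then show ?thesis
      using that disj ab merged other unfolding disjoint_family_on_def
      by (metis Int_Un_distrib Int_commute Un_empty_left Diff_iff insertI1)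
  next
    case False
    then show ?thesis using that disj other unfolding disjoint_family_on_def by auto
  qed
  then show "disjoint_family_on A' (J - {b})" unfolding disjoint_family_on_def by blast
  have "A' j \<subseteq> (\<Union>j\<in>J. A j)" if "j \<in> J" for j
    using that ab merged other by (cases "j = a") auto
  moreover have "A j \<subseteq> (\<Union>j\<in>J - {b}. A' j)" if "j \<in> J" for j
  proof (cases "j = a \<or> j = b")
    case True
    then have "A j \<subseteq> A' a" using merged by auto
    then show ?thesis using ab by blast
  next
    case False
    then show ?thesis using that other by blast
  qed
  ultimately show "(\<Union>j\<in>J - {b}. A' j) = (\<Union>j\<in>J. A j)" by blast
qed

text \<open>Besides the claims of the theorem it records that
  tau_1 lies below mu_i and that the trees still in use, tau_1 and tau_i, ..., tau_k, have
  disjoint vertex sets covering the ground set; the discarded trees are never looked at again.\<close>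
definition stage_invariant :: "nat set set \<Rightarrow> nat \<Rightarrow> (nat \<Rightarrow> tree) \<Rightarrow> nat \<Rightarrow> bool \<Rightarrow> bool" where
  "stage_invariant P i tau nu fl \<longleftrightarrow>
     (\<forall>j \<in> {i..card P}. pi_increasing P (tau j) \<and> irreducible_tree P (tau j) \<and>
        Max (verts (tau j)) = mu P j) \<and>
     pi_increasing P (tau 1) \<and> (\<forall>x \<in> verts (tau 1). x < mu P i) \<and> nu \<in> verts (tau 1) \<and>
     disjoint_family_on (\<lambda>j. verts (tau j)) (insert 1 {i..card P}) \<and>
     \<Union>P \<subseteq> (\<Union>j \<in> insert 1 {i..card P}. verts (tau j)) \<and>
     (fl \<longrightarrow> reducible_tree P (tau 1))"

lemma input_stage_Suc: "2 \<le> i \<Longrightarrow> input_stage P c (Suc i) = stage P c (input_stage P c i) i"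
  by (simp add: input_stage_def)

lemma live_trees_merge:
  fixes tau :: "nat \<Rightarrow> tree" and m v :: nat
  assumes disj: "disjoint_family_on (\<lambda>j. verts (tau j)) (insert 1 {i..k})"
    and cover: "A \<subseteq> (\<Union>j \<in> insert 1 {i..k}. verts (tau j))"
    and a: "a \<in> insert 1 {Suc i..k}" and i: "2 \<le> i" "i \<le> k"
  defines "tau' \<equiv> tau(a := spl (tau i) m (tau a) v)"
  shows "disjoint_family_on (\<lambda>j. verts (tau' j)) (insert 1 {Suc i..k})"
    and "A \<subseteq> (\<Union>j \<in> insert 1 {Suc i..k}. verts (tau' j))"
proof -
  have J: "insert 1 {Suc i..k} = insert 1 {i..k} - {i}" using i by auto
  have "a \<in> insert 1 {i..k}" "i \<in> insert 1 {i..k}" "a \<noteq> i" using a i by auto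
  note merge = disjoint_family_on_merge[OF disj this, of "\<lambda>j. verts (tau' j)"]
  have "verts (tau' a) = verts (tau a) \<union> verts (tau i)" "\<And>j. j \<noteq> a \<Longrightarrow> verts (tau' j) = verts (tau j)"
    unfolding tau'_def by (auto simp: verts_spl)
  then show "disjoint_family_on (\<lambda>j. verts (tau' j)) (insert 1 {Suc i..k})"
    and "A \<subseteq> (\<Union>j \<in> insert 1 {Suc i..k}. verts (tau' j))"
    using merge cover unfolding J by auto
qed

context interval_partition
begin

lemma stage_invariant_internal:
  assumes inv: "stage_invariant P i tau nu fl" and i: "2 \<le> i" "i < card P"
    and c: "c \<in> verts (tau 1) \<union> verts (tau i)"
  shows "stage_invariant P (Suc i) (tau(1 := spl (tau i) (mu P i) (tau 1) nu)) c True"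
proof -
  let ?T = "spl (tau i) (mu P i) (tau 1) nu" and ?J = "insert 1 {i..card P}"
  have tau_i: "pi_increasing P (tau i)" "Max (verts (tau i)) = mu P i"
    and tau_1: "pi_increasing P (tau 1)" "\<forall>x \<in> verts (tau 1). x < mu P i" "nu \<in> verts (tau 1)"
    and disj: "disjoint_family_on (\<lambda>j. verts (tau j)) ?J"
    and cover: "\<Union>P \<subseteq> (\<Union>j \<in> ?J. verts (tau j))"
    and later: "\<forall>j \<in> {Suc i..card P}. pi_increasing P (tau j) \<and> irreducible_tree P (tau j) \<and>
        Max (verts (tau j)) = mu P j"
    using inv i unfolding stage_invariant_def by auto
  have "verts (tau i) \<inter> verts (tau 1) = {}" using disjoint_family_onD[OF disj, of i 1] i by auto
  moreover have "\<forall>x \<in> verts (tau 1). x < Max (verts (tau i))" using tau_1(2) tau_i(2) by simp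
  ultimately have new: "pi_increasing P ?T" "reducible_tree P ?T"
    using pi_increasing_reducible_spl_Max[OF tau_i(1) tau_1(1) _ tau_1(3)] unfolding tau_i(2)
    by auto
  have "x \<le> mu P i" if "x \<in> verts (tau i)" for x
    using Max_ge[OF inc_treeD(1)[OF pi_increasing_inc_tree[OF tau_i(1)]] that] tau_i(2) by simp
  then have below: "\<forall>x \<in> verts ?T. x < mu P (Suc i)"
    using tau_1(2) mu_strict_mono[of i "Suc i"] i by (fastforce simp: verts_spl)
  have "\<forall>j \<in> {Suc i..card P}. pi_increasing P ((tau(1 := ?T)) j) \<and>
      irreducible_tree P ((tau(1 := ?T)) j) \<and>
      Max (verts ((tau(1 := ?T)) j)) = mu P j"
    using later i by auto
  then show ?thesis
    unfolding stage_invariant_def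
    using new below c live_trees_merge[OF disj cover _ i(1), of 1] i by (simp add: verts_spl, blast)
qed

lemma stage_invariant_external:
  assumes inv: "stage_invariant P i tau nu fl" and i: "2 \<le> i" "i < card P"
    and j: "i < j" "j \<le> card P" and c: "c \<in> verts (tau j)" "c \<le> mu P i"
  shows "stage_invariant P (Suc i) (tau(j := spl (tau i) (mu P i) (tau j) c)) nu fl"
proof -
  let ?T = "spl (tau i) (mu P i) (tau j) c" and ?J = "insert 1 {i..card P}"
  have tau_i: "pi_increasing P (tau i)" "irreducible_tree P (tau i)" "Max (verts (tau i)) = mu P i"
    and tau_j: "pi_increasing P (tau j)" "irreducible_tree P (tau j)" "Max (verts (tau j)) = mu P j"
    and tau_1: "pi_increasing P (tau 1)" "\<forall>x \<in> verts (tau 1). x < mu P i" "nu \<in> verts (tau 1)"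
      "fl \<longrightarrow> reducible_tree P (tau 1)"
    and disj: "disjoint_family_on (\<lambda>j. verts (tau j)) ?J"
    and cover: "\<Union>P \<subseteq> (\<Union>j \<in> ?J. verts (tau j))"
    and later: "\<forall>j \<in> {Suc i..card P}. pi_increasing P (tau j) \<and> irreducible_tree P (tau j) \<and>
        Max (verts (tau j)) = mu P j"
    using inv i j unfolding stage_invariant_def by auto
  have disj_ij: "verts (tau i) \<inter> verts (tau j) = {}"
    using disjoint_family_onD[OF disj, of i j] i j by auto
  have "c \<noteq> mu P i"
    using c(1) disj_ij Max_verts_in[OF pi_increasing_inc_tree[OF tau_i(1)]] tau_i(3) by auto
  then have "c < Max (verts (tau i))" "Max (verts (tau i)) < Max (verts (tau j))"
    using c(2) tau_i(3) tau_j(3) mu_strict_mono[of i j] i j by auto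
  then have new: "pi_increasing P ?T" "irreducible_tree P ?T" "Max (verts ?T) = mu P j"
    using pi_increasing_irreducible_spl_Max[OF tau_i(1) tau_j(1) tau_i(2) tau_j(2) disj_ij c(1)]
    unfolding tau_i(3) tau_j(3) by auto
  have "\<forall>j' \<in> {Suc i..card P}. pi_increasing P ((tau(j := ?T)) j') \<and>
      irreducible_tree P ((tau(j := ?T)) j') \<and> Max (verts ((tau(j := ?T)) j')) = mu P j'"
    using later new by auto
  moreover have "\<forall>x \<in> verts (tau 1). x < mu P (Suc i)"
    using tau_1(2) mu_strict_mono[of i "Suc i"] i by fastforce
  ultimately show ?thesis
    unfolding stage_invariant_def
    using tau_1 live_trees_merge[OF disj cover _ i(1), of j] i j by simp
qed

lemma stage_invariant_stage:
  assumes inv: "stage_invariant P i tau nu fl" and i: "2 \<le> i" "i < card P"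
    and c: "1 \<le> c i" "c i \<le> mu P i"
  shows "case stage P c (tau, nu, fl) i of
           (tau', nu', fl') \<Rightarrow> stage_invariant P (Suc i) tau' nu' fl'"
proof (cases "c i \<in> verts (tau 1) \<or> c i \<in> verts (tau i)")
  case True
  then show ?thesis using stage_invariant_internal[OF inv i] unfolding stage_def by simp
next
  case False
  let ?J = "insert 1 {i..card P}"
  have disj: "disjoint_family_on (\<lambda>j. verts (tau j)) ?J"
    and cover: "\<Union>P \<subseteq> (\<Union>j \<in> ?J. verts (tau j))"
    using inv unfolding stage_invariant_def by auto
  have "c i \<in> \<Union>P" using c mu_le[of i] i by (simp add: Union_partition)
  then obtain j where "j \<in> ?J" and cj: "c i \<in> verts (tau j)" using cover by blast
  with False have j: "i < j" "j \<le> card P" by (auto simp: order_le_less)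
  have "(LEAST j. i < j \<and> c i \<in> verts (tau j)) = j"
  proof (rule Least_equality)
    fix j' assume j': "i < j' \<and> c i \<in> verts (tau j')"
    show "j \<le> j'"
    proof (rule ccontr)
      assume "\<not> j \<le> j'"
      then have "verts (tau j') \<inter> verts (tau j) = {}"
        using disjoint_family_onD[OF disj] j j' by auto
      then show False using j' cj by blast
    qed
  qed (use j cj in simp)
  then show ?thesis
    using stage_invariant_external[OF inv i j cj c(2)] False unfolding stage_def
    by (simp add: Let_def)
qed

end

locale pointed_partition = interval_partition +
  assumes singleton_block: "{1} \<in> P" and two_le_r: "2 \<le> r"
begin

lemma two_le_card: "2 \<le> card P"
proof -
  have "r \<in> \<Union>P" using two_le_r by (simp add: Union_partition)
  then obtain B where B: "B \<in> P" "r \<in> B" by blast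
  then have "B \<noteq> {1}" using two_le_r by auto
  then have "card {B, {1}} = 2" by simp
  moreover have "{B, {1}} \<subseteq> P" using B singleton_block by simp
  ultimately show ?thesis using card_mono[OF finite_partition] by metis
qed

lemma blk_1: "blk P 1 = {1}"
proof -
  obtain i where i: "1 \<le> i" "i \<le> card P" "mu P i = 1"
    using mu_surj[of 1] singleton_block by force
  have "mu P 1 \<ge> 1" using mu_in[of 1] two_le_card Max_block block_subset by fastforce
  then have "mu P 1 = 1" using mu_strict_mono[of 1 i] i by (cases "i = 1") auto
  then show ?thesis
    using blk[of 1] two_le_card singleton_block inj_on_Max
    by (metis Max_singleton inj_onD one_le_numeral order.trans order_refl)
qed

lemma stage_invariant_init: "stage_invariant P 2 (fst (init_state P)) 1 False"
proof -
  let ?tau = "\<lambda>l. chain_tree (blk P l)"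
  have J: "insert 1 {2..card P} = {1..card P}" using two_le_card by auto
  have chains:
    "pi_increasing P (?tau l) \<and> irreducible_tree P (?tau l) \<and> Max (verts (?tau l)) = mu P l"
    if "l \<in> {1..card P}" for l
    using blk that pi_increasing_chain_tree irreducible_chain_tree by simp
  have "mu P 1 = 1" using blk[of 1] blk_1 two_le_card by simp
  moreover have "verts (?tau 1) = {1}" using blk_1 by simp
  ultimately have below: "\<forall>x \<in> verts (?tau 1). x < mu P 2" and root: "1 \<in> verts (?tau 1)"
    using mu_strict_mono[of 1 2] two_le_card by simp_all
  have disj: "disjoint_family_on (\<lambda>l. verts (?tau l)) {1..card P}"
    using disjoint_blk by simp
  have cover: "\<Union>P \<subseteq> (\<Union>l \<in> {1..card P}. verts (?tau l))"
    using blk_image by auto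
  show ?thesis
    unfolding stage_invariant_def init_state_def fst_conv J
    using chains[of 1] chains two_le_card below root disj cover by auto
qed

lemma stage_invariant_input_stage:
  assumes c: "in_C P c" and i: "2 \<le> i" "i \<le> card P"
  shows "case input_stage P c i of (tau, nu, fl) \<Rightarrow> stage_invariant P i tau nu fl"
  using i
proof (induction i rule: dec_induct)
  case base
  then show ?case using stage_invariant_init by (simp add: input_stage_def init_state_def)
next
  case (step n)
  obtain tau nu fl where s: "input_stage P c n = (tau, nu, fl)" by (cases "input_stage P c n")
  then have "stage_invariant P n tau nu fl" using step by simp
  from stage_invariant_stage[OF this step(1)] step c show ?case
    using input_stage_Suc[OF step(1)] s unfolding in_C_def by simp
qed

lemma psi_pi_increasing_reducible:
  assumes c: "in_C P c"
  shows "pi_increasing P (psi P c) \<and> reducible_tree P (psi P c)"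
proof -
  let ?k = "card P"
  obtain tau nu fl where s: "input_stage P c ?k = (tau, nu, fl)" by (cases "input_stage P c ?k")
  then have inv: "stage_invariant P ?k tau nu fl"
    using stage_invariant_input_stage[OF c two_le_card] by simp
  have tau_k: "pi_increasing P (tau ?k)" "Max (verts (tau ?k)) = mu P ?k"
    and tau_1: "pi_increasing P (tau 1)" "\<forall>x \<in> verts (tau 1). x < mu P ?k" "nu \<in> verts (tau 1)"
    and disj: "disjoint_family_on (\<lambda>j. verts (tau j)) (insert 1 {?k..?k})"
    using inv unfolding stage_invariant_def by auto
  have "verts (tau ?k) \<inter> verts (tau 1) = {}"
    using disjoint_family_onD[OF disj, of ?k 1] two_le_card by simp
  then show ?thesis
    using pi_increasing_reducible_spl_Max[OF tau_k(1) tau_1(1) _ tau_1(3)] tau_k(2) tau_1(2) s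
    by (simp add: psi_def Let_def)
qed

lemma init_trees:
  "\<forall>l. 1 \<le> l \<and> l \<le> card P \<longrightarrow>
     pi_increasing P (fst (init_state P) l) \<and> irreducible_tree P (fst (init_state P) l)"
  using blk pi_increasing_chain_tree irreducible_chain_tree by (simp add: init_state_def)

lemma input_stage_trees:
  assumes c: "in_C P c"
  shows "\<forall>i. 2 \<le> i \<and> i \<le> card P \<longrightarrow>
           (case input_stage P c i of (tau, nu, fl) \<Rightarrow>
              (\<forall>j. i \<le> j \<and> j \<le> card P \<longrightarrow>
                 pi_increasing P (tau j) \<and> irreducible_tree P (tau j) \<and> mu P j \<in> verts (tau j))
              \<and> (fl \<longrightarrow> pi_increasing P (tau 1) \<and> reducible_tree P (tau 1)))"
proof (intro allI impI)
  fix i assume i: "2 \<le> i \<and> i \<le> card P"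
  obtain tau nu fl where s: "input_stage P c i = (tau, nu, fl)" by (cases "input_stage P c i")
  then have inv: "stage_invariant P i tau nu fl"
    using stage_invariant_input_stage[OF c, of i] i by simp
  have "pi_increasing P (tau j) \<and> irreducible_tree P (tau j) \<and> mu P j \<in> verts (tau j)"
    if "i \<le> j" "j \<le> card P" for j
  proof -
    have "pi_increasing P (tau j)" "irreducible_tree P (tau j)" "Max (verts (tau j)) = mu P j"
      using inv that unfolding stage_invariant_def by auto
    then show ?thesis using Max_verts_in[OF pi_increasing_inc_tree] by metis
  qed
  moreover have "fl \<longrightarrow> pi_increasing P (tau 1) \<and> reducible_tree P (tau 1)"
    using inv unfolding stage_invariant_def by simp
  ultimately show "case input_stage P c i of (tau, nu, fl) \<Rightarrow>
              (\<forall>j. i \<le> j \<and> j \<le> card P \<longrightarrow>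
                 pi_increasing P (tau j) \<and> irreducible_tree P (tau j) \<and> mu P j \<in> verts (tau j))
              \<and> (fl \<longrightarrow> pi_increasing P (tau 1) \<and> reducible_tree P (tau 1))"
    using s by simp
qed

end

theorem proposition3p7:
  fixes r :: nat and P :: "nat set set" and c :: "nat \<Rightarrow> nat"
  assumes "r \<ge> 2"
    and "partition_on {1..r} P"
    and "{1} \<in> P"
    and "in_C P c"
  shows "(\<forall>l. 1 \<le> l \<and> l \<le> card P \<longrightarrow>
            pi_increasing P (fst (init_state P) l) \<and> irreducible_tree P (fst (init_state P) l))
       \<and> (\<forall>i. 2 \<le> i \<and> i \<le> card P \<longrightarrow>
            (case input_stage P c i of (tau, nu, fl) \<Rightarrow>
               (\<forall>j. i \<le> j \<and> j \<le> card P \<longrightarrow>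
                   pi_increasing P (tau j) \<and> irreducible_tree P (tau j) \<and> mu P j \<in> verts (tau j))
             \<and> (fl \<longrightarrow> pi_increasing P (tau 1) \<and> reducible_tree P (tau 1))))
       \<and> pi_increasing P (psi P c) \<and> reducible_tree P (psi P c)"
proof -
  interpret pointed_partition r P using assms by unfold_locales auto
  show ?thesis
    using init_trees input_stage_trees[OF assms(4)] psi_pi_increasing_reducible[OF assms(4)]
    by (intro conjI[OF _ conjI])
qed

end
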